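(* In the setting described in the context, assume (F1) and (F2). Then for all $t\ge0$, $$\|w(t+1)-n\pi\otimes\bar w(t+1)\|_{\pi\otimes1_d}\le\sigma_W(1+\alpha L\delta)\|w(t)-n\pi\otimes\bar w(t)\|_{\pi\otimes1_d}+\alpha L\sigma_WD_1[t]\,\|\bar w(t)-w_*\|+\alpha\sigma_WD_2[t],$$ where $D_1[t]=\delta\|1_n-n\pi\|_\pi\sigma_W^t+\sqrt{\sum_{j=1}^n1/\pi_j}$ and $D_2[t]=L\delta\|1_n-n\pi\|_\pi\sigma_W^t\|w_*\|+\|\nabla F(1_n\otimes w_* )\|_{\pi\otimes1_d}$.
   Context: $G=(V,E)$ directed on $\{1,\dots,n\}$, self-loop at each vertex, strongly connected; $d_j=|\{i:(j,i)\in E\}|$, $W_{ij}=1/d_j$ if $(j,i)\in E$, else $0$. $\pi$: $W\pi=\pi$, $\pi_i>0$, $\sum\pi_i=1$; $W^\infty=\pi1_n^\top$. $\|x\|_\pi=(\sum_ix_i^2/\pi_i)^{1/2}$ on $\mathbb R^n$, $|||\cdot|||_\pi$ the induced operator norm, $\sigma_W=|||W-W^\infty|||_\pi$ (known $<1$). On $\mathbb R^{nd}$, $\|x\|_{\pi\otimes1_d}=(\sum_i\|x_i\|^2/\pi_i)^{1/2}$. $v\otimes u=\mathrm{col}(v_1u,\dots,v_nu)$. $f_i:\mathbb R^d\to\mathbb R$, $f=\frac1n\sum f_i$; (F1) each $\nabla f_i$ is $L_i$-Lipschitz, $L=\max L_i$; (F2) $f$ is $\beta$-strongly convex, $\beta>0$;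 $w_*$ is the minimizer of $f$. $\nabla F(x)=\mathrm{col}(\nabla f_1(x_1),\dots,\nabla f_n(x_n))$. Algorithm with stepsize $\alpha>0$: given $w(0)\in\mathbb R^{nd}$, $y(0)=1_n$; for $t\ge0$: $z_i(t)=w_i(t)/y_i(t)$, $x_i(t)=w_i(t)-\alpha\nabla f_i(z_i(t))$, $w_i(t+1)=\sum_jW_{ij}x_j(t)$, $y_i(t+1)=\sum_jW_{ij}y_j(t)$. $\bar w(t)=\frac1n\sum_iw_i(t)$, $\delta=\sup_{t\ge0}\max_i1/y_i(t)$. *)

theory Defs
  imports "HOL-Analysis.Analysis"
begin

text \<open>Vertices are the elements of a finite type 'n (so n = CARD('n)); points of R^d are
elements of a Euclidean space 'a. Vectors in R^n are functions 'n => real, n x n matrices are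
functions 'n => 'n => real, and stacked vectors in R^{nd} are functions 'n => 'a.\<close>

definition out_degree :: "('n \<times> 'n) set \<Rightarrow> 'n \<Rightarrow> nat" where
  "out_degree E j = card {i. (j, i) \<in> E}"

definition mixW :: "('n \<times> 'n) set \<Rightarrow> 'n \<Rightarrow> 'n \<Rightarrow> real" where
  "mixW E i j = (if (j, i) \<in> E then 1 / real (out_degree E j) else 0)"

definition mat_vec :: "('n::finite \<Rightarrow> 'n \<Rightarrow> real) \<Rightarrow> ('n \<Rightarrow> real) \<Rightarrow> 'n \<Rightarrow> real" where
  "mat_vec M x = (\<lambda>i. \<Sum>j\<in>UNIV. M i j * x j)"

definition Winf :: "('n::finite \<Rightarrow> real) \<Rightarrow> 'n \<Rightarrow> 'n \<Rightarrow> real" where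
  "Winf \<pi> i j = \<pi> i"

definition pi_norm :: "('n::finite \<Rightarrow> real) \<Rightarrow> ('n \<Rightarrow> real) \<Rightarrow> real" where
  "pi_norm \<pi> x = sqrt (\<Sum>i\<in>UNIV. (x i)\<^sup>2 / \<pi> i)"

definition pi_opnorm :: "('n::finite \<Rightarrow> real) \<Rightarrow> ('n \<Rightarrow> 'n \<Rightarrow> real) \<Rightarrow> real" where
  "pi_opnorm \<pi> M = (SUP x\<in>{x. \<exists>i. x i \<noteq> 0}. pi_norm \<pi> (mat_vec M x) / pi_norm \<pi> x)"

definition sigmaW :: "('n::finite \<times> 'n) set \<Rightarrow> ('n \<Rightarrow> real) \<Rightarrow> real" where
  "sigmaW E \<pi> = pi_opnorm \<pi> (\<lambda>i j. mixW E i j - Winf \<pi> i j)"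

definition blk_norm :: "('n::finite \<Rightarrow> real) \<Rightarrow> ('n \<Rightarrow> 'a::real_normed_vector) \<Rightarrow> real" where
  "blk_norm \<pi> x = sqrt (\<Sum>i\<in>UNIV. (norm (x i))\<^sup>2 / \<pi> i)"

definition strongly_convex_on :: "real \<Rightarrow> 'a::real_inner set \<Rightarrow> ('a \<Rightarrow> real) \<Rightarrow> bool" where
  "strongly_convex_on \<beta> S f \<longleftrightarrow> convex_on S (\<lambda>x. f x - (\<beta> / 2) * (norm x)\<^sup>2)"

primrec yseq :: "('n::finite \<times> 'n) set \<Rightarrow> nat \<Rightarrow> 'n \<Rightarrow> real" where
  "yseq E 0 = (\<lambda>i. 1)"
| "yseq E (Suc t) = mat_vec (mixW E) (yseq E t)"

primrec wseq :: "('n::finite \<times> 'n) set \<Rightarrow> real \<Rightarrow> ('n \<Rightarrow> 'a \<Rightarrow> 'a::real_normed_vector)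
    \<Rightarrow> ('n \<Rightarrow> 'a) \<Rightarrow> nat \<Rightarrow> 'n \<Rightarrow> 'a" where
  "wseq E \<alpha> g w0 0 = w0"
| "wseq E \<alpha> g w0 (Suc t) =
     (\<lambda>i. \<Sum>j\<in>UNIV. mixW E i j *\<^sub>R
        (wseq E \<alpha> g w0 t j - \<alpha> *\<^sub>R g j ((1 / yseq E t j) *\<^sub>R wseq E \<alpha> g w0 t j)))"

definition wbar :: "('n::finite \<Rightarrow> 'a::real_vector) \<Rightarrow> 'a" where
  "wbar w = (1 / real CARD('n)) *\<^sub>R (\<Sum>i\<in>UNIV. w i)"

definition deltaY :: "('n::finite \<times> 'n) set \<Rightarrow> real" where
  "deltaY E = (SUP t. Max (range (\<lambda>i. 1 / yseq E t i)))"

end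

theory Submission
  imports Defs
begin

text \<open>Let D = W - W_inf. Since W is column stochastic, the consensus error
w - n\<pi> \<otimes> w_bar of W x is D x, and D annihilates every n\<pi> \<otimes> c because
W\<pi> = \<pi> and \<pi> sums to 1. Hence the error after one step is D applied to the error of w(t)
minus \<alpha> \<nabla>F(z(t)), and applying D coordinatewise in R^d costs a factor
\<sigma>_W = |||D|||_\<pi>. The gradient is controlled by Lipschitz continuity around 1 \<otimes> w*, and the
splitting z_i - w* = (e_i - (y_i - n\<pi>_i) w_bar) / y_i + (w_bar - w*), with e the consensus error,
brings in the push-sum weights: by the same consensus argument
||y(t) - n\<pi>||_\<pi> \<le> \<sigma>_W^t ||1 - n\<pi>||_\<pi>, and strong connectivity bounds them below
uniformly, so \<delta> is finite.\<close>

definition blk_mat_vec ::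
    "('n::finite \<Rightarrow> 'n \<Rightarrow> real) \<Rightarrow> ('n \<Rightarrow> 'a::real_vector) \<Rightarrow> 'n \<Rightarrow> 'a" where
  "blk_mat_vec M x = (\<lambda>i. \<Sum>j\<in>UNIV. M i j *\<^sub>R x j)"

lemma blk_norm_eq_L2_set:
  assumes "\<forall>i. \<pi> i > 0"
  shows "blk_norm \<pi> x = L2_set (\<lambda>i. norm (x i) / sqrt (\<pi> i)) UNIV"
  unfolding blk_norm_def L2_set_def using assms by (simp add: power_divide less_imp_le)

lemma pi_norm_eq_blk_norm: "pi_norm \<pi> x = blk_norm \<pi> x"
  unfolding pi_norm_def blk_norm_def by simp

lemma blk_norm_nonneg:
  assumes "\<forall>i. \<pi> i > 0"
  shows "0 \<le> blk_norm \<pi> x"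
  using assms by (simp add: blk_norm_eq_L2_set)

lemma blk_norm_mono:
  fixes x :: "'n::finite \<Rightarrow> 'a::real_normed_vector" and y :: "'n \<Rightarrow> 'b::real_normed_vector"
  assumes pos: "\<forall>i. \<pi> i > 0" and le: "\<And>i. norm (x i) \<le> norm (y i)"
  shows "blk_norm \<pi> x \<le> blk_norm \<pi> y"
  unfolding blk_norm_eq_L2_set[OF pos]
  using pos le by (intro L2_set_mono divide_right_mono) (auto simp: less_imp_le)

lemma blk_norm_subadditive:
  fixes x :: "'n::finite \<Rightarrow> 'a::real_normed_vector" and y :: "'n \<Rightarrow> 'b::real_normed_vector"
    and z :: "'n \<Rightarrow> 'c::real_normed_vector"
  assumes pos: "\<forall>i. \<pi> i > 0" and le: "\<And>i. norm (z i) \<le> norm (x i) + norm (y i)"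
  shows "blk_norm \<pi> z \<le> blk_norm \<pi> x + blk_norm \<pi> y"
proof -
  have "blk_norm \<pi> z \<le> L2_set (\<lambda>i. norm (x i) / sqrt (\<pi> i) + norm (y i) / sqrt (\<pi> i)) UNIV"
    unfolding blk_norm_eq_L2_set[OF pos] using pos le
    by (intro L2_set_mono)
      (auto simp: less_imp_le simp flip: add_divide_distrib intro!: divide_right_mono)
  also have "\<dots> \<le> blk_norm \<pi> x + blk_norm \<pi> y"
    unfolding blk_norm_eq_L2_set[OF pos] by (rule L2_set_triangle_ineq)
  finally show ?thesis .
qed

lemma blk_norm_scaleR: "blk_norm \<pi> (\<lambda>i. a *\<^sub>R x i) = \<bar>a\<bar> * blk_norm \<pi> x"
proof -
  have "(\<Sum>i\<in>UNIV. (norm (a *\<^sub>R x i))\<^sup>2 / \<pi> i) = a\<^sup>2 * (\<Sum>i\<in>UNIV. (norm (x i))\<^sup>2 / \<pi> i)"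
    by (simp add: power_mult_distrib sum_distrib_left)
  then show ?thesis unfolding blk_norm_def by (simp add: real_sqrt_mult)
qed

lemma blk_norm_scaleR_le:
  assumes pos: "\<forall>i. \<pi> i > 0" and le: "\<And>i. \<bar>a i\<bar> \<le> c"
  shows "blk_norm \<pi> (\<lambda>i. a i *\<^sub>R x i) \<le> c * blk_norm \<pi> x"
proof -
  have c: "\<bar>c\<bar> = c" using le[of undefined] by simp
  have "blk_norm \<pi> (\<lambda>i. a i *\<^sub>R x i) \<le> blk_norm \<pi> (\<lambda>i. c *\<^sub>R x i)"
    using le c by (intro blk_norm_mono[OF pos]) (simp add: mult_right_mono)
  then show ?thesis by (simp add: blk_norm_scaleR c)
qed

lemma blk_norm_scaleR_const: "blk_norm \<pi> (\<lambda>i. a i *\<^sub>R u) = pi_norm \<pi> a * norm u"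
  unfolding blk_norm_def pi_norm_def
  by (simp add: power_mult_distrib real_sqrt_mult flip: sum_distrib_right times_divide_eq_left)

lemma blk_norm_const: "blk_norm \<pi> (\<lambda>i. u) = norm u * sqrt (\<Sum>j\<in>UNIV. 1 / \<pi> j)"
  using blk_norm_scaleR_const[of \<pi> "\<lambda>i. 1" u] by (simp add: pi_norm_def)

lemma norm_le_blk_norm:
  assumes pos: "\<forall>i. \<pi> i > 0"
  shows "norm (x j) \<le> blk_norm \<pi> x * sqrt (\<pi> j)"
proof -
  have "norm (x j) / sqrt (\<pi> j) \<le> blk_norm \<pi> x"
    unfolding blk_norm_eq_L2_set[OF pos] by (rule member_le_L2_set) auto
  then show ?thesis using pos by (simp add: divide_le_eq)
qed

lemma pi_norm_pos:
  assumes pos: "\<forall>i. \<pi> i > 0" and "x j \<noteq> 0"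
  shows "pi_norm \<pi> x > 0"
proof -
  have "0 < \<bar>x j\<bar>" using assms by simp
  also have "\<dots> \<le> pi_norm \<pi> x * sqrt (\<pi> j)"
    using norm_le_blk_norm[OF pos, of x j] by (simp add: pi_norm_eq_blk_norm)
  finally show ?thesis using pos blk_norm_nonneg[OF pos, of x]
    by (simp add: pi_norm_eq_blk_norm zero_less_mult_iff)
qed

lemma blk_norm_eq_sqrt_sum_Basis:
  fixes x :: "'n::finite \<Rightarrow> 'a::euclidean_space"
  assumes pos: "\<forall>i. \<pi> i > 0"
  shows "blk_norm \<pi> x = sqrt (\<Sum>b\<in>Basis. (pi_norm \<pi> (\<lambda>i. x i \<bullet> b))\<^sup>2)"
proof -
  have "(pi_norm \<pi> (\<lambda>i. x i \<bullet> b))\<^sup>2 = (\<Sum>i\<in>UNIV. (x i \<bullet> b)\<^sup>2 / \<pi> i)" for b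
    unfolding pi_norm_def using pos by (simp add: sum_nonneg less_imp_le)
  then have "(\<Sum>b\<in>Basis. (pi_norm \<pi> (\<lambda>i. x i \<bullet> b))\<^sup>2)
        = (\<Sum>i\<in>UNIV. \<Sum>b\<in>Basis. (x i \<bullet> b)\<^sup>2 / \<pi> i)"
    by (simp add: sum.swap[of _ Basis])
  also have "\<dots> = (\<Sum>i\<in>UNIV. (norm (x i))\<^sup>2 / \<pi> i)"
  proof -
    have "(norm (x i))\<^sup>2 = (\<Sum>b\<in>Basis. (x i \<bullet> b)\<^sup>2)" for i
      unfolding power2_norm_eq_inner by (subst euclidean_inner) (simp add: power2_eq_square)
    then show ?thesis by (simp flip: sum_divide_distrib)
  qed
  finally show ?thesis unfolding blk_norm_def by simp
qed

lemma pi_norm_mat_vec_bounded: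
  assumes pos: "\<forall>i. \<pi> i > 0"
  shows "\<exists>B. \<forall>x. pi_norm \<pi> (mat_vec M x) \<le> B * pi_norm \<pi> x"
proof -
  define r where "r i = (\<Sum>j\<in>UNIV. \<bar>M i j\<bar> * sqrt (\<pi> j))" for i
  have r: "0 \<le> r i" for i
    using pos by (auto simp: r_def less_imp_le intro!: sum_nonneg)
  have "pi_norm \<pi> (mat_vec M x) \<le> pi_norm \<pi> r * pi_norm \<pi> x" for x
  proof -
    have "\<bar>mat_vec M x i\<bar> \<le> pi_norm \<pi> x * r i" for i
    proof -
      have "\<bar>mat_vec M x i\<bar> \<le> (\<Sum>j\<in>UNIV. \<bar>M i j\<bar> * \<bar>x j\<bar>)"
        unfolding mat_vec_def by (rule sum_abs[THEN order_trans]) (simp add: abs_mult)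
      also have "\<dots> \<le> (\<Sum>j\<in>UNIV. \<bar>M i j\<bar> * (pi_norm \<pi> x * sqrt (\<pi> j)))"
        using norm_le_blk_norm[OF pos, of x]
        by (intro sum_mono mult_left_mono) (auto simp: pi_norm_eq_blk_norm)
      finally show ?thesis by (simp add: r_def sum_distrib_left mult_ac)
    qed
    moreover have "0 \<le> pi_norm \<pi> x * r i" for i
      using r blk_norm_nonneg[OF pos]
      by (intro mult_nonneg_nonneg) (simp_all add: pi_norm_eq_blk_norm)
    ultimately have "pi_norm \<pi> (mat_vec M x) \<le> pi_norm \<pi> (\<lambda>i. pi_norm \<pi> x * r i)"
      unfolding pi_norm_eq_blk_norm by (intro blk_norm_mono[OF pos]) auto
    also have "\<dots> = pi_norm \<pi> r * pi_norm \<pi> x"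
      using blk_norm_scaleR[of \<pi> "pi_norm \<pi> x" r] blk_norm_nonneg[OF pos, of x]
      by (simp add: pi_norm_eq_blk_norm)
    finally show ?thesis .
  qed
  then show ?thesis by blast
qed

lemma bdd_above_pi_opnorm:
  assumes pos: "\<forall>i. \<pi> i > 0"
  shows "bdd_above ((\<lambda>x. pi_norm \<pi> (mat_vec M x) / pi_norm \<pi> x) ` {x. \<exists>i. x i \<noteq> 0})"
proof -
  obtain B where B: "\<And>x. pi_norm \<pi> (mat_vec M x) \<le> B * pi_norm \<pi> x"
    using pi_norm_mat_vec_bounded[OF pos] by blast
  have "pi_norm \<pi> (mat_vec M x) / pi_norm \<pi> x \<le> B" if "x i \<noteq> 0" for x i
    using B[of x] pi_norm_pos[of \<pi> x i] pos that by (simp add: divide_le_eq)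
  then show ?thesis by (auto intro!: bdd_aboveI)
qed

lemma pi_opnorm_nonneg:
  assumes pos: "\<forall>i. \<pi> i > 0"
  shows "0 \<le> pi_opnorm \<pi> M"
proof -
  have "0 \<le> pi_norm \<pi> (mat_vec M (\<lambda>i. 1)) / pi_norm \<pi> (\<lambda>i. 1)"
    by (intro divide_nonneg_nonneg) (simp_all add: pi_norm_eq_blk_norm blk_norm_nonneg[OF pos])
  also have "\<dots> \<le> pi_opnorm \<pi> M"
    unfolding pi_opnorm_def by (rule cSUP_upper[OF _ bdd_above_pi_opnorm[OF pos]]) simp
  finally show ?thesis .
qed

lemma pi_norm_mat_vec_le:
  assumes pos: "\<forall>i. \<pi> i > 0"
  shows "pi_norm \<pi> (mat_vec M x) \<le> pi_opnorm \<pi> M * pi_norm \<pi> x"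
proof (cases "\<exists>i. x i \<noteq> 0")
  case True
  then obtain i where "x i \<noteq> 0" by blast
  then have "pi_norm \<pi> x > 0" using pi_norm_pos[of \<pi> x i] pos by blast
  moreover have "pi_norm \<pi> (mat_vec M x) / pi_norm \<pi> x \<le> pi_opnorm \<pi> M"
    unfolding pi_opnorm_def using True by (intro cSUP_upper bdd_above_pi_opnorm[OF pos]) simp
  ultimately show ?thesis by (simp add: divide_le_eq)
next
  case False
  then have "x = (\<lambda>i. 0)" by auto
  then show ?thesis using pi_opnorm_nonneg[OF pos] by (simp add: pi_norm_def mat_vec_def)
qed

lemma blk_norm_blk_mat_vec_le:
  fixes x :: "'n::finite \<Rightarrow> 'a::euclidean_space"
  assumes pos: "\<forall>i. \<pi> i > 0"
  shows "blk_norm \<pi> (blk_mat_vec M x) \<le> pi_opnorm \<pi> M * blk_norm \<pi> x"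
proof -
  let ?s = "pi_opnorm \<pi> M"
  have coord: "(\<lambda>i. blk_mat_vec M x i \<bullet> b) = mat_vec M (\<lambda>j. x j \<bullet> b)" for b
    by (simp add: blk_mat_vec_def mat_vec_def inner_sum_left)
  have "blk_norm \<pi> (blk_mat_vec M x)
      = sqrt (\<Sum>b\<in>Basis. (pi_norm \<pi> (mat_vec M (\<lambda>j. x j \<bullet> b)))\<^sup>2)"
    by (simp add: blk_norm_eq_sqrt_sum_Basis[OF pos] coord)
  also have "\<dots> \<le> sqrt (\<Sum>b\<in>Basis. (?s * pi_norm \<pi> (\<lambda>j. x j \<bullet> b))\<^sup>2)"
    using blk_norm_nonneg[OF pos]
    by (intro real_sqrt_le_mono sum_mono power_mono pi_norm_mat_vec_le[OF pos])
      (simp add: pi_norm_eq_blk_norm)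
  also have "\<dots> = ?s * blk_norm \<pi> x"
    using pi_opnorm_nonneg[OF pos]
    by (simp add: blk_norm_eq_sqrt_sum_Basis[OF pos] power_mult_distrib real_sqrt_mult
        flip: sum_distrib_left)
  finally show ?thesis .
qed

definition mixW_dev ::
    "('n::finite \<times> 'n) set \<Rightarrow> ('n \<Rightarrow> real) \<Rightarrow> 'n \<Rightarrow> 'n \<Rightarrow> real" where
  "mixW_dev E \<pi> = (\<lambda>i j. mixW E i j - Winf \<pi> i j)"

definition consensus_err ::
    "('n::finite \<Rightarrow> real) \<Rightarrow> ('n \<Rightarrow> 'a::real_vector) \<Rightarrow> 'n \<Rightarrow> 'a" where
  "consensus_err \<pi> u = (\<lambda>i. u i - (real CARD('n) * \<pi> i) *\<^sub>R wbar u)"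

lemma sigmaW_eq_pi_opnorm_mixW_dev: "sigmaW E \<pi> = pi_opnorm \<pi> (mixW_dev E \<pi>)"
  by (simp add: sigmaW_def mixW_dev_def)

lemma sigmaW_nonneg: "\<forall>i. \<pi> i > 0 \<Longrightarrow> 0 \<le> sigmaW E \<pi>"
  by (simp add: sigmaW_eq_pi_opnorm_mixW_dev pi_opnorm_nonneg)

lemma out_degree_ge_1:
  assumes loops: "\<forall>i. (i, i) \<in> E"
  shows "1 \<le> out_degree E (j::'n::finite)"
proof -
  have "{i. (j, i) \<in> E} \<noteq> {}" using loops by auto
  then show ?thesis by (simp add: out_degree_def Suc_le_eq card_gt_0_iff)
qed

lemma out_degree_le_card: "out_degree E (j::'n::finite) \<le> CARD('n)"
  unfolding out_degree_def by (rule card_mono) auto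

lemma mixW_nonneg: "0 \<le> mixW E i j"
  by (simp add: mixW_def)

lemma sum_mixW_column:
  assumes loops: "\<forall>i. (i, i) \<in> E"
  shows "(\<Sum>i\<in>UNIV. mixW E i (j::'n::finite)) = 1"
proof -
  have "(\<Sum>i\<in>UNIV. mixW E i j) = (\<Sum>i\<in>{i. (j, i) \<in> E}. 1 / real (out_degree E j))"
    unfolding mixW_def by (simp flip: sum.inter_filter)
  also have "\<dots> = 1"
    using out_degree_ge_1[OF loops, of j] loops unfolding out_degree_def by auto
  finally show ?thesis .
qed

lemma mixW_ge_inverse_card:
  assumes loops: "\<forall>i. (i, i) \<in> E" and edge: "(j, i) \<in> E"
  shows "1 / real CARD('n) \<le> mixW E i (j::'n::finite)"
  using out_degree_ge_1[OF loops, of j] out_degree_le_card[of E j] edge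
  by (simp add: mixW_def frac_le)

lemma blk_mat_vec_diff:
  "blk_mat_vec M (\<lambda>j. u j - v j) = (\<lambda>i. blk_mat_vec M u i - blk_mat_vec M v i)"
  by (simp add: blk_mat_vec_def scaleR_diff_right sum_subtractf)

lemma blk_mat_vec_scaleR: "blk_mat_vec M (\<lambda>j. a *\<^sub>R u j) = (\<lambda>i. a *\<^sub>R blk_mat_vec M u i)"
  by (simp add: blk_mat_vec_def scaleR_sum_right mult.commute)

lemma wbar_blk_mat_vec_mixW:
  assumes loops: "\<forall>i. (i, i) \<in> E"
  shows "wbar (blk_mat_vec (mixW E) u) = wbar u"
proof -
  have "(\<Sum>i\<in>UNIV. blk_mat_vec (mixW E) u i)
      = (\<Sum>j\<in>UNIV. (\<Sum>i\<in>UNIV. mixW E i j) *\<^sub>R u j)"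
    unfolding blk_mat_vec_def scaleR_sum_left by (rule sum.swap)
  then show ?thesis by (simp add: wbar_def sum_mixW_column[OF loops])
qed

lemma consensus_err_blk_mat_vec_mixW:
  fixes E :: "('n::finite \<times> 'n) set"
  assumes loops: "\<forall>i. (i, i) \<in> E"
  shows "consensus_err \<pi> (blk_mat_vec (mixW E) u) = blk_mat_vec (mixW_dev E \<pi>) u"
proof
  fix i
  have "(real CARD('n) * \<pi> i) *\<^sub>R wbar u = \<pi> i *\<^sub>R (\<Sum>j\<in>UNIV. u j)"
    by (simp add: wbar_def)
  then show "consensus_err \<pi> (blk_mat_vec (mixW E) u) i = blk_mat_vec (mixW_dev E \<pi>) u i"
    unfolding consensus_err_def wbar_blk_mat_vec_mixW[OF loops]
    by (simp add: blk_mat_vec_def mixW_dev_def Winf_def scaleR_diff_left sum_subtractf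
        scaleR_sum_right)
qed

lemma blk_mat_vec_mixW_dev_pi:
  assumes pi_stat: "mat_vec (mixW E) \<pi> = \<pi>" and pi_sum: "(\<Sum>i\<in>UNIV. \<pi> i) = 1"
  shows "blk_mat_vec (mixW_dev E \<pi>) (\<lambda>j. \<pi> j *\<^sub>R c) = (\<lambda>i. 0)"
proof
  fix i
  have "(\<Sum>j\<in>UNIV. mixW E i j * \<pi> j) = \<pi> i"
    using fun_cong[OF pi_stat, of i] by (simp add: mat_vec_def)
  then show "blk_mat_vec (mixW_dev E \<pi>) (\<lambda>j. \<pi> j *\<^sub>R c) i = 0"
    by (simp add: blk_mat_vec_def mixW_dev_def Winf_def algebra_simps sum_subtractf pi_sum
        flip: scaleR_sum_left sum_distrib_left)
qed

lemma blk_mat_vec_mixW_dev_consensus_err: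
  fixes E :: "('n::finite \<times> 'n) set"
  assumes pi_stat: "mat_vec (mixW E) \<pi> = \<pi>" and pi_sum: "(\<Sum>i\<in>UNIV. \<pi> i) = 1"
  shows "blk_mat_vec (mixW_dev E \<pi>) (consensus_err \<pi> u) = blk_mat_vec (mixW_dev E \<pi>) u"
proof -
  have "consensus_err \<pi> u = (\<lambda>j. u j - \<pi> j *\<^sub>R (real CARD('n) *\<^sub>R wbar u))"
    unfolding consensus_err_def by (simp add: mult.commute)
  then show ?thesis
    by (simp only: blk_mat_vec_diff blk_mat_vec_mixW_dev_pi[OF pi_stat pi_sum]) simp
qed

lemma blk_norm_consensus_err_mix_le:
  fixes E :: "('n::finite \<times> 'n) set" and u g :: "'n \<Rightarrow> 'a::euclidean_space"
  assumes loops: "\<forall>i. (i, i) \<in> E"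
    and pi_stat: "mat_vec (mixW E) \<pi> = \<pi>"
    and pos: "\<forall>i. \<pi> i > 0"
    and pi_sum: "(\<Sum>i\<in>UNIV. \<pi> i) = 1"
  shows "blk_norm \<pi> (consensus_err \<pi> (blk_mat_vec (mixW E) (\<lambda>j. u j - \<alpha> *\<^sub>R g j)))
    \<le> sigmaW E \<pi> * (blk_norm \<pi> (consensus_err \<pi> u) + \<bar>\<alpha>\<bar> * blk_norm \<pi> g)"
proof -
  let ?D = "blk_mat_vec (mixW_dev E \<pi>)"
  have err: "consensus_err \<pi> (blk_mat_vec (mixW E) (\<lambda>j. u j - \<alpha> *\<^sub>R g j))
      = (\<lambda>i. ?D (consensus_err \<pi> u) i - \<alpha> *\<^sub>R ?D g i)"
    unfolding consensus_err_blk_mat_vec_mixW[OF loops]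
    by (simp add: blk_mat_vec_diff blk_mat_vec_scaleR
        blk_mat_vec_mixW_dev_consensus_err[OF pi_stat pi_sum])
  have "blk_norm \<pi> (consensus_err \<pi> (blk_mat_vec (mixW E) (\<lambda>j. u j - \<alpha> *\<^sub>R g j)))
      \<le> blk_norm \<pi> (?D (consensus_err \<pi> u)) + blk_norm \<pi> (\<lambda>i. \<alpha> *\<^sub>R ?D g i)"
    unfolding err by (intro blk_norm_subadditive[OF pos] norm_triangle_ineq4)
  also have "\<dots> \<le> sigmaW E \<pi> * blk_norm \<pi> (consensus_err \<pi> u)
      + \<bar>\<alpha>\<bar> * (sigmaW E \<pi> * blk_norm \<pi> g)"
    unfolding sigmaW_eq_pi_opnorm_mixW_dev blk_norm_scaleR
    by (intro add_mono mult_left_mono blk_norm_blk_mat_vec_le[OF pos]) simp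
  finally show ?thesis by (simp add: algebra_simps)
qed

lemma yseq_Suc_eq_blk_mat_vec: "yseq E (Suc t) = blk_mat_vec (mixW E) (yseq E t)"
  by (simp add: blk_mat_vec_def mat_vec_def)

lemma wbar_yseq:
  assumes loops: "\<forall>i. (i, i) \<in> E"
  shows "wbar (yseq E t :: 'n::finite \<Rightarrow> real) = 1"
proof (induction t)
  case 0
  then show ?case by (simp add: wbar_def)
next
  case (Suc t)
  then show ?case by (simp only: yseq_Suc_eq_blk_mat_vec wbar_blk_mat_vec_mixW[OF loops])
qed

lemma sum_yseq:
  assumes loops: "\<forall>i. (i, i) \<in> E"
  shows "(\<Sum>i\<in>UNIV. yseq E t (i::'n::finite)) = real CARD('n)"
  using wbar_yseq[OF loops, of t] by (simp add: wbar_def)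

lemma pi_norm_yseq_deviation_le:
  fixes E :: "('n::finite \<times> 'n) set"
  assumes loops: "\<forall>i. (i, i) \<in> E"
    and pi_stat: "mat_vec (mixW E) \<pi> = \<pi>"
    and pos: "\<forall>i. \<pi> i > 0"
    and pi_sum: "(\<Sum>i\<in>UNIV. \<pi> i) = 1"
  shows "pi_norm \<pi> (\<lambda>i. yseq E t i - real CARD('n) * \<pi> i)
    \<le> sigmaW E \<pi> ^ t * pi_norm \<pi> (\<lambda>i. 1 - real CARD('n) * \<pi> i)"
proof (induction t)
  case 0
  then show ?case by simp
next
  case (Suc t)
  have err: "consensus_err \<pi> (yseq E s) = (\<lambda>i. yseq E s i - real CARD('n) * \<pi> i)" for s
    by (simp add: consensus_err_def wbar_yseq[OF loops] mult.commute)
  have "pi_norm \<pi> (\<lambda>i. yseq E (Suc t) i - real CARD('n) * \<pi> i)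
      = blk_norm \<pi> (consensus_err \<pi> (blk_mat_vec (mixW E) (yseq E t)))"
    by (simp only: err pi_norm_eq_blk_norm flip: yseq_Suc_eq_blk_mat_vec)
  also have "\<dots> \<le> sigmaW E \<pi> * pi_norm \<pi> (\<lambda>i. yseq E t i - real CARD('n) * \<pi> i)"
    using blk_norm_consensus_err_mix_le[OF loops pi_stat pos pi_sum, of "yseq E t" 0]
    by (simp add: err pi_norm_eq_blk_norm)
  also have "\<dots> \<le> sigmaW E \<pi> * (sigmaW E \<pi> ^ t * pi_norm \<pi> (\<lambda>i. 1 - real CARD('n) * \<pi> i))"
    by (rule mult_left_mono[OF Suc sigmaW_nonneg[OF pos]])
  finally show ?case by simp
qed

lemma yseq_nonneg: "0 \<le> yseq E t i"
  by (induction t arbitrary: i) (auto simp: mat_vec_def mixW_nonneg intro!: sum_nonneg)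

lemma yseq_Suc_ge_edge:
  assumes loops: "\<forall>i. (i, i) \<in> E" and edge: "(j, i) \<in> E"
  shows "yseq E t j / real CARD('n) \<le> yseq E (Suc t) (i::'n::finite)"
proof -
  have "yseq E t j / real CARD('n) \<le> mixW E i j * yseq E t j"
    using mult_right_mono[OF mixW_ge_inverse_card[OF loops edge] yseq_nonneg] by simp
  also have "\<dots> \<le> (\<Sum>k\<in>UNIV. mixW E i k * yseq E t k)"
    by (rule member_le_sum) (auto simp: mixW_nonneg yseq_nonneg)
  finally show ?thesis by (simp add: mat_vec_def)
qed

lemma yseq_ge_relpow:
  assumes loops: "\<forall>i. (i, i) \<in> E" and walk: "(j, i) \<in> E ^^ k"
  shows "yseq E t j / real CARD('n) ^ k \<le> yseq E (t + k) (i::'n::finite)"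
  using walk
proof (induction k arbitrary: i)
  case 0
  then show ?case by simp
next
  case (Suc k)
  then obtain m where m: "(j, m) \<in> E ^^ k" "(m, i) \<in> E" by auto
  have "yseq E t j / real CARD('n) ^ Suc k = (yseq E t j / real CARD('n) ^ k) / real CARD('n)"
    by simp
  also have "\<dots> \<le> yseq E (t + k) m / real CARD('n)"
    by (rule divide_right_mono[OF Suc.IH[OF m(1)]]) simp
  also have "\<dots> \<le> yseq E (Suc (t + k)) i"
    by (rule yseq_Suc_ge_edge[OF loops m(2)])
  finally show ?case by simp
qed

lemma refl_in_relpow: "\<forall>i. (i, i) \<in> E \<Longrightarrow> (i, i) \<in> E ^^ k"
  by (induction k) auto

lemma strongly_connected_relpow_uniform:
  fixes E :: "('n::finite \<times> 'n) set"
  assumes loops: "\<forall>i. (i, i) \<in> E" and strong: "\<forall>i j. (i, j) \<in> E\<^sup>*"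
  obtains K where "\<And>j i. (j, i) \<in> E ^^ K"
proof -
  have "\<forall>j i. \<exists>k. (j, i) \<in> E ^^ k" using strong by (simp add: rtrancl_power)
  then obtain k where k: "\<And>j i. (j, i) \<in> E ^^ k j i" by metis
  define K where "K = Max (range (\<lambda>(j, i). k j i))"
  have "(j, i) \<in> E ^^ K" for j i
  proof -
    have le: "k j i \<le> K"
      unfolding K_def by (rule Max_ge) (auto intro!: image_eqI[of _ _ "(j, i)"])
    have "(j, i) \<in> E ^^ k j i O E ^^ (K - k j i)"
      using k refl_in_relpow[OF loops] by blast
    then show ?thesis using le by (simp flip: relpow_add)
  qed
  then show ?thesis by (rule that)
qed

lemma yseq_uniform_lower_bound:
  fixes E :: "('n::finite \<times> 'n) set"
  assumes loops: "\<forall>i. (i, i) \<in> E" and strong: "\<forall>i j. (i, j) \<in> E\<^sup>*"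
  obtains c where "c > 0" "\<And>t i. c \<le> yseq E t i"
proof -
  obtain K where K: "\<And>j i. (j, i) \<in> E ^^ K"
    using strongly_connected_relpow_uniform[OF loops strong] by blast
  let ?n = "real CARD('n)"
  have n1: "1 \<le> ?n" by (simp add: Suc_le_eq)
  have "1 / ?n ^ K \<le> yseq E t i" for t i
  proof (cases "K \<le> t")
    case True
    have "\<exists>j. 1 \<le> yseq E (t - K) j"
    proof (rule ccontr)
      assume "\<not> ?thesis"
      then have "(\<Sum>j\<in>UNIV. yseq E (t - K) j) < (\<Sum>j\<in>(UNIV::'n set). 1)"
        by (intro sum_strict_mono) (auto simp: not_le)
      then show False using sum_yseq[OF loops, of "t - K"] by simp
    qed
    then obtain j where j: "1 \<le> yseq E (t - K) j" by blast
    have "1 / ?n ^ K \<le> yseq E (t - K) j / ?n ^ K"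
      using j by (simp add: divide_right_mono)
    also have "\<dots> \<le> yseq E (t - K + K) i" by (rule yseq_ge_relpow[OF loops K])
    finally show ?thesis using True by simp
  next
    case False
    have "1 / ?n ^ K \<le> 1 / ?n ^ t"
      using False n1 by (intro divide_left_mono power_increasing) auto
    also have "\<dots> \<le> yseq E (0 + t) i"
      using yseq_ge_relpow[OF loops refl_in_relpow[OF loops], of 0 i t] by simp
    finally show ?thesis by simp
  qed
  moreover have "1 / ?n ^ K > 0" using n1 by simp
  ultimately show ?thesis using that by blast
qed

lemma yseq_pos_and_deltaY_bound:
  fixes E :: "('n::finite \<times> 'n) set"
  assumes loops: "\<forall>i. (i, i) \<in> E" and strong: "\<forall>i j. (i, j) \<in> E\<^sup>*"
  shows "0 < yseq E t i" and "1 / yseq E t i \<le> deltaY E"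
proof -
  obtain c where c: "c > 0" "\<And>t i. c \<le> yseq E t i"
    using yseq_uniform_lower_bound[OF loops strong] by blast
  show "0 < yseq E t i" using c by (meson less_le_trans)
  have "Max (range (\<lambda>i. 1 / yseq E s i)) \<le> 1 / c" for s
    using c by (simp add: frac_le)
  then have bdd: "bdd_above (range (\<lambda>s. Max (range (\<lambda>i. 1 / yseq E s i))))"
    by (intro bdd_aboveI[where M = "1 / c"]) auto
  have "1 / yseq E t i \<le> Max (range (\<lambda>i. 1 / yseq E t i))" by (rule Max_ge) auto
  also have "\<dots> \<le> deltaY E" unfolding deltaY_def by (rule cSUP_upper[OF _ bdd]) simp
  finally show "1 / yseq E t i \<le> deltaY E" .
qed

lemma blk_norm_lipschitz_gradient_le:
  fixes gradf :: "'n::finite \<Rightarrow> 'a::real_normed_vector \<Rightarrow> 'b::real_normed_vector"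
  assumes pos: "\<forall>i. \<pi> i > 0"
    and lip: "\<And>i. (Li i)-lipschitz_on UNIV (gradf i)" and le: "\<And>i. Li i \<le> L"
  shows "blk_norm \<pi> (\<lambda>i. gradf i (z i))
    \<le> L * blk_norm \<pi> (\<lambda>i. z i - wstar) + blk_norm \<pi> (\<lambda>i. gradf i wstar)"
proof -
  have L: "0 \<le> L" using lipschitz_on_nonneg[OF lip] le by (meson order_trans)
  have "norm (gradf i (z i)) \<le> norm (L *\<^sub>R (z i - wstar)) + norm (gradf i wstar)" for i
  proof -
    have "norm (gradf i (z i) - gradf i wstar) \<le> Li i * norm (z i - wstar)"
      using lipschitz_onD[OF lip] by (simp add: dist_norm)
    also have "\<dots> \<le> L * norm (z i - wstar)" by (rule mult_right_mono[OF le]) simp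
    finally show ?thesis using norm_triangle_sub[of "gradf i (z i)" "gradf i wstar"] L by simp
  qed
  then have "blk_norm \<pi> (\<lambda>i. gradf i (z i))
      \<le> blk_norm \<pi> (\<lambda>i. L *\<^sub>R (z i - wstar)) + blk_norm \<pi> (\<lambda>i. gradf i wstar)"
    by (rule blk_norm_subadditive[OF pos])
  then show ?thesis using L by (simp add: blk_norm_scaleR)
qed

lemma blk_norm_push_sum_ratio_le:
  fixes u :: "'n::finite \<Rightarrow> 'a::real_normed_vector"
  assumes pos: "\<forall>i. \<pi> i > 0" and y_pos: "\<And>i. 0 < y i" and y_inv: "\<And>i. 1 / y i \<le> \<delta>"
  shows "blk_norm \<pi> (\<lambda>i. (1 / y i) *\<^sub>R u i - wstar)
    \<le> \<delta> * (blk_norm \<pi> (consensus_err \<pi> u)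
          + pi_norm \<pi> (\<lambda>i. y i - real CARD('n) * \<pi> i) * (norm (wbar u - wstar) + norm wstar))
      + norm (wbar u - wstar) * sqrt (\<Sum>j\<in>UNIV. 1 / \<pi> j)"
proof -
  let ?e = "consensus_err \<pi> u" and ?d = "\<lambda>i. y i - real CARD('n) * \<pi> i"
  have split: "(1 / y i) *\<^sub>R u i - wstar
      = (1 / y i) *\<^sub>R (?e i - ?d i *\<^sub>R wbar u) + (wbar u - wstar)" for i
    using y_pos[of i] by (simp add: consensus_err_def algebra_simps)
  have "blk_norm \<pi> (\<lambda>i. (1 / y i) *\<^sub>R u i - wstar)
      \<le> blk_norm \<pi> (\<lambda>i. (1 / y i) *\<^sub>R (?e i - ?d i *\<^sub>R wbar u))
        + blk_norm \<pi> (\<lambda>i. wbar u - wstar)"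
    unfolding split by (intro blk_norm_subadditive[OF pos] norm_triangle_ineq)
  also have "\<dots> \<le> \<delta> * blk_norm \<pi> (\<lambda>i. ?e i - ?d i *\<^sub>R wbar u)
      + norm (wbar u - wstar) * sqrt (\<Sum>j\<in>UNIV. 1 / \<pi> j)"
    using y_pos y_inv
    by (intro add_mono blk_norm_scaleR_le[OF pos]) (simp_all add: blk_norm_const abs_of_pos)
  also have "\<dots> \<le> \<delta> * (blk_norm \<pi> ?e + pi_norm \<pi> ?d * (norm (wbar u - wstar) + norm wstar))
      + norm (wbar u - wstar) * sqrt (\<Sum>j\<in>UNIV. 1 / \<pi> j)"
  proof -
    have "0 \<le> \<delta>"
      using y_pos[of undefined] y_inv[of undefined]
      by (meson less_imp_le order_trans zero_less_divide_1_iff)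
    have "blk_norm \<pi> (\<lambda>i. ?e i - ?d i *\<^sub>R wbar u)
        \<le> blk_norm \<pi> ?e + blk_norm \<pi> (\<lambda>i. ?d i *\<^sub>R wbar u)"
      by (intro blk_norm_subadditive[OF pos] norm_triangle_ineq4)
    also have "\<dots> \<le> blk_norm \<pi> ?e + pi_norm \<pi> ?d * (norm (wbar u - wstar) + norm wstar)"
      unfolding blk_norm_scaleR_const
      using norm_triangle_sub[of "wbar u" wstar] blk_norm_nonneg[OF pos, of ?d]
      by (intro add_left_mono mult_left_mono) (simp_all add: pi_norm_eq_blk_norm)
    finally show ?thesis using \<open>0 \<le> \<delta>\<close> by (intro add_right_mono mult_left_mono)
  qed
  finally show ?thesis .
qed

lemma blk_norm_consensus_err_gradient_step_le:
  fixes E :: "('n::finite \<times> 'n) set"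
    and u :: "'n \<Rightarrow> 'a::euclidean_space" and gradf :: "'n \<Rightarrow> 'a \<Rightarrow> 'a" and wstar :: 'a
  assumes loops: "\<forall>i. (i, i) \<in> E"
    and pi_stat: "mat_vec (mixW E) \<pi> = \<pi>"
    and pos: "\<forall>i. \<pi> i > 0"
    and pi_sum: "(\<Sum>i\<in>UNIV. \<pi> i) = 1"
    and lip: "\<And>i. (Li i)-lipschitz_on UNIV (gradf i)" and Li: "\<And>i. Li i \<le> L"
    and y_pos: "\<And>i. 0 < y i" and y_inv: "\<And>i. 1 / y i \<le> \<delta>"
    and dev: "pi_norm \<pi> (\<lambda>i. y i - real CARD('n) * \<pi> i) \<le> p"
    and \<alpha>: "0 \<le> \<alpha>"
  defines "\<sigma> \<equiv> sigmaW E \<pi>" and "A \<equiv> blk_norm \<pi> (consensus_err \<pi> u)"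
    and "e \<equiv> norm (wbar u - wstar)" and "S \<equiv> sqrt (\<Sum>j\<in>UNIV. 1 / \<pi> j)"
    and "G \<equiv> blk_norm \<pi> (\<lambda>i. gradf i wstar)"
  shows "blk_norm \<pi> (consensus_err \<pi>
           (blk_mat_vec (mixW E) (\<lambda>j. u j - \<alpha> *\<^sub>R gradf j ((1 / y j) *\<^sub>R u j))))
    \<le> \<sigma> * (1 + \<alpha> * L * \<delta>) * A + \<alpha> * L * \<sigma> * (\<delta> * p + S) * e
      + \<alpha> * \<sigma> * (L * \<delta> * p * norm wstar + G)"
proof -
  define g where "g = (\<lambda>j. gradf j ((1 / y j) *\<^sub>R u j))"
  have \<sigma>: "0 \<le> \<sigma>" unfolding \<sigma>_def by (rule sigmaW_nonneg[OF pos])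
  have \<delta>: "0 \<le> \<delta>"
    using y_pos[of undefined] y_inv[of undefined]
    by (meson less_imp_le order_trans zero_less_divide_1_iff)
  have L: "0 \<le> L" using lipschitz_on_nonneg[OF lip] Li by (meson order_trans)
  have "\<delta> * (A + pi_norm \<pi> (\<lambda>i. y i - real CARD('n) * \<pi> i) * (e + norm wstar))
      \<le> \<delta> * (A + p * (e + norm wstar))"
    using dev \<delta> by (intro mult_left_mono add_left_mono mult_right_mono) (simp_all add: e_def)
  then have ratio: "blk_norm \<pi> (\<lambda>i. (1 / y i) *\<^sub>R u i - wstar)
      \<le> \<delta> * (A + p * (e + norm wstar)) + e * S"
    using blk_norm_push_sum_ratio_le[where y = y and u = u and wstar = wstar, OF pos y_pos y_inv]
    unfolding A_def e_def S_def by linarith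
  have "blk_norm \<pi> g \<le> L * blk_norm \<pi> (\<lambda>i. (1 / y i) *\<^sub>R u i - wstar) + G"
    unfolding g_def G_def by (rule blk_norm_lipschitz_gradient_le[OF pos lip Li])
  then have grad: "blk_norm \<pi> g \<le> L * (\<delta> * (A + p * (e + norm wstar)) + e * S) + G"
    using mult_left_mono[OF ratio L] by linarith
  have "blk_norm \<pi> (consensus_err \<pi> (blk_mat_vec (mixW E) (\<lambda>j. u j - \<alpha> *\<^sub>R g j)))
      \<le> \<sigma> * (A + \<alpha> * blk_norm \<pi> g)"
    using blk_norm_consensus_err_mix_le[OF loops pi_stat pos pi_sum, where u = u and g = g and \<alpha> = \<alpha>]
      \<alpha>
    unfolding \<sigma>_def A_def by simp
  also have "\<dots> \<le> \<sigma> * (A + \<alpha> * (L * (\<delta> * (A + p * (e + norm wstar)) + e * S) + G))"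
    using grad \<sigma> \<alpha> by (intro mult_left_mono add_left_mono) simp_all
  also have "\<dots> = \<sigma> * (1 + \<alpha> * L * \<delta>) * A + \<alpha> * L * \<sigma> * (\<delta> * p + S) * e
      + \<alpha> * \<sigma> * (L * \<delta> * p * norm wstar + G)"
    by (simp add: algebra_simps)
  finally show ?thesis unfolding g_def .
qed

theorem proposition5p2:
  fixes E :: "('n::finite \<times> 'n) set"
    and \<pi> :: "'n \<Rightarrow> real"
    and f :: "'n \<Rightarrow> 'a::euclidean_space \<Rightarrow> real"
    and gradf :: "'n \<Rightarrow> 'a \<Rightarrow> 'a"
    and Li :: "'n \<Rightarrow> real"
    and \<beta> \<alpha> :: real
    and wstar :: 'a
    and w0 :: "'n \<Rightarrow> 'a"
    and t :: nat
  assumes loops: "\<forall>i. (i, i) \<in> E"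
    and strong: "\<forall>i j. (i, j) \<in> E\<^sup>*"
    and pi_stat: "mat_vec (mixW E) \<pi> = \<pi>"
    and pi_pos: "\<forall>i. \<pi> i > 0"
    and pi_sum: "(\<Sum>i\<in>UNIV. \<pi> i) = 1"
    and grad: "\<forall>i x. (f i has_derivative (\<lambda>h. gradf i x \<bullet> h)) (at x)"
    and F1: "\<forall>i. (Li i)-lipschitz_on UNIV (gradf i)"
    and F2: "\<beta> > 0" "strongly_convex_on \<beta> UNIV (\<lambda>x. (1 / real CARD('n)) * (\<Sum>i\<in>UNIV. f i x))"
    and wstar_min: "\<forall>x. (1 / real CARD('n)) * (\<Sum>i\<in>UNIV. f i wstar)
                       \<le> (1 / real CARD('n)) * (\<Sum>i\<in>UNIV. f i x)"
    and alpha_pos: "\<alpha> > 0"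
  shows
    "let n = real CARD('n);
         L = Max (range Li);
         \<sigma> = sigmaW E \<pi>;
         \<delta> = deltaY E;
         w = wseq E \<alpha> gradf w0;
         c = pi_norm \<pi> (\<lambda>i. 1 - n * \<pi> i);
         D1 = \<delta> * c * \<sigma> ^ t + sqrt (\<Sum>j\<in>UNIV. 1 / \<pi> j);
         D2 = L * \<delta> * c * \<sigma> ^ t * norm wstar + blk_norm \<pi> (\<lambda>i. gradf i wstar)
     in blk_norm \<pi> (\<lambda>i. w (Suc t) i - (n * \<pi> i) *\<^sub>R wbar (w (Suc t)))
        \<le> \<sigma> * (1 + \<alpha> * L * \<delta>) * blk_norm \<pi> (\<lambda>i. w t i - (n * \<pi> i) *\<^sub>R wbar (w t))
          + \<alpha> * L * \<sigma> * D1 * norm (wbar (w t) - wstar)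
          + \<alpha> * \<sigma> * D2"
proof -
  let ?n = "real CARD('n)"
  define w where "w = wseq E \<alpha> gradf w0"
  define y where "y = yseq E t"
  have y_pos: "\<And>i. 0 < y i" and y_inv: "\<And>i. 1 / y i \<le> deltaY E"
    unfolding y_def using yseq_pos_and_deltaY_bound[OF loops strong] by blast+
  have Li: "\<And>i. Li i \<le> Max (range Li)" by (rule Max_ge) auto
  have dev: "pi_norm \<pi> (\<lambda>i. y i - ?n * \<pi> i) \<le> pi_norm \<pi> (\<lambda>i. 1 - ?n * \<pi> i) * sigmaW E \<pi> ^ t"
    using pi_norm_yseq_deviation_le[OF loops pi_stat pi_pos pi_sum, of t]
    by (simp add: y_def mult.commute)
  have "blk_mat_vec (mixW E) (\<lambda>j. w t j - \<alpha> *\<^sub>R gradf j ((1 / y j) *\<^sub>R w t j)) = w (Suc t)"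
    by (simp add: w_def y_def blk_mat_vec_def)
  with blk_norm_consensus_err_gradient_step_le[where u = "w t" and wstar = wstar and y = y
      and gradf = gradf and Li = Li,
      OF loops pi_stat pi_pos pi_sum F1[rule_format] Li y_pos y_inv dev less_imp_le[OF alpha_pos]]
  show ?thesis unfolding Let_def consensus_err_def w_def by (simp only: mult.assoc)
qed

end
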